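(* Let $\mathcal P$ be a Poisson algebra over $\mathbb R$ (a commutative associative unital $\mathbb R$-algebra with an antisymmetric bilinear bracket $\{\cdot,\cdot\}_p$ satisfying the Jacobi identity and the Leibniz rule $\{X,YZ\}_p=\{X,Y\}_pZ+\{X,Z\}_pY$) which is an integral domain. Fix an integer $M\ge 1$ and put $L=\lfloor M/2\rfloor$. Let $A,B\in\mathcal P$ be algebraically independent over $\mathbb R$ (no nonzero real polynomial $P(x,y)$ satisfies $P(A,B)=0$), put $C=\{A,B\}_p$ and assume $C\neq 0$. Suppose there are real constants $\alpha_1,\dots,\alpha_{L+1},\delta,\epsilon,\beta,\lambda_1,\dots,\lambda_M,\rho,\eta,\omega_1,\dots,\omega_L,\zeta$ with $$\{A,C\}_p=\sum_{i=1}^{L+1}\alpha_iA^i+\delta B+\epsilon+2\beta AB,\qquad \{B,C\}_p=\sum_{i=1}^{M}\lambda_iA^i+\rho B^2+\eta B+\sum_{i=1}^{L}2\omega_iA^iB+\zeta .$$ Then $\eta=-\alpha_1$, $\rho=-\beta$ and $2\omega_i=-(i+1)\alpha_{i+1}$ for $i=1,\dots,L$. Consequently $$\{B,C\}_p=\sum_{i=1}^{M}\lambda_iA^i-\beta B^2-\alpha_1B-\sum_{i=1}^{L}(i+1)\alpha_{i+1}A^iB+\zeta .$$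
   Context: $\lfloor y\rfloor$ denotes the integer part of $y$, so $\lfloor M/2+1\rfloor=L+1$. A typical example of such $\mathcal P$ is the polynomial algebra $\mathbb R[q_1,q_2,p_1,p_2]$ with the canonical bracket $\{X,Y\}_p=\sum_{i=1}^2\left(\frac{\partial X}{\partial q_i}\frac{\partial Y}{\partial p_i}-\frac{\partial X}{\partial p_i}\frac{\partial Y}{\partial q_i}\right)$, with $A$ of degree 2 and $B$ of degree $M$ in the momenta. *)

theory Defs
  imports Complex_Main
begin

definition poisson_bracket :: "('a::{real_algebra_1,comm_ring_1} \<Rightarrow> 'a \<Rightarrow> 'a) \<Rightarrow> bool" where
  "poisson_bracket pb \<longleftrightarrow>
     (\<forall>x y z. pb (x + y) z = pb x z + pb y z) \<and>
     (\<forall>x y z. pb x (y + z) = pb x y + pb x z) \<and>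
     (\<forall>r x y. pb (r *\<^sub>R x) y = r *\<^sub>R pb x y) \<and>
     (\<forall>r x y. pb x (r *\<^sub>R y) = r *\<^sub>R pb x y) \<and>
     (\<forall>x y. pb x y = - pb y x) \<and>
     (\<forall>x y z. pb x (pb y z) + pb y (pb z x) + pb z (pb x y) = 0) \<and>
     (\<forall>x y z. pb x (y * z) = pb x y * z + pb x z * y)"

definition alg_indep2 :: "'a::{real_algebra_1,comm_ring_1} \<Rightarrow> 'a \<Rightarrow> bool" where
  "alg_indep2 A B \<longleftrightarrow>
     (\<forall>c :: nat \<Rightarrow> nat \<Rightarrow> real.
        finite {(i, j). c i j \<noteq> 0} \<longrightarrow>
        (\<Sum>(i, j)\<in>{(i, j). c i j \<noteq> 0}. c i j *\<^sub>R (A ^ i * B ^ j)) = 0 \<longrightarrow>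
        (\<forall>i j. c i j = 0))"

end

theory Submission imports Defs begin

text \<open>By the Jacobi identity and antisymmetry, \<open>{A,{B,C}} = {B,{A,C}}\<close> for \<open>C = {A,B}\<close>.
  By the Leibniz rule \<open>{A,\<cdot>}\<close> acts on polynomials in \<open>A, B\<close> as \<open>C \<partial>\<^sub>B\<close> and \<open>{B,\<cdot>}\<close> as
  \<open>-C \<partial>\<^sub>A\<close>, so the identity becomes \<open>C (\<partial>\<^sub>B{B,C} + \<partial>\<^sub>A{A,C}) = 0\<close>. Cancelling \<open>C \<noteq> 0\<close>
  in the integral domain leaves a polynomial relation between \<open>A\<close> and \<open>B\<close> that is affine
  in \<open>B\<close>; algebraic independence forces all its coefficients to vanish.\<close>

locale poisson =
  fixes pb :: "'a::{real_algebra_1,comm_ring_1} \<Rightarrow> 'a \<Rightarrow> 'a"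
  assumes poisson_bracket: "poisson_bracket pb"
begin

lemma add_right: "pb x (y + z) = pb x y + pb x z"
  and scaleR_right: "pb x (r *\<^sub>R y) = r *\<^sub>R pb x y"
  and skew_symmetric: "pb x y = - pb y x"
  and jacobi: "pb x (pb y z) + pb y (pb z x) + pb z (pb x y) = 0"
  and leibniz: "pb x (y * z) = pb x y * z + pb x z * y"
  using poisson_bracket unfolding poisson_bracket_def by blast+

lemma self [simp]: "pb x x = 0"
proof -
  have "pb x x = - pb x x" by (rule skew_symmetric)
  then have "(2::real) *\<^sub>R pb x x = 0" by (simp add: scaleR_2)
  then show ?thesis by simp
qed

lemma zero_right [simp]: "pb x 0 = 0"
  using add_right[of x 0 0] by simp

lemma one_right [simp]: "pb x 1 = 0"
  using leibniz[of x 1 1] by simp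

lemma minus_right: "pb x (- y) = - pb x y"
proof -
  have "pb x (- y) + pb x y = 0"
    using add_right[of x "- y" y] by simp
  then show ?thesis by (simp add: eq_neg_iff_add_eq_0)
qed

lemma sum_right: "pb x (sum f S) = (\<Sum>i\<in>S. pb x (f i))"
  by (induction S rule: infinite_finite_induct) (simp_all add: add_right)

lemma power_right: "pb x (y ^ n) = of_nat n * y ^ (n - 1) * pb x y"
proof (induction n)
  case (Suc n)
  then show ?case
    by (cases n) (simp_all add: leibniz algebra_simps)
qed simp

lemma jacobi_commute: "pb x (pb y (pb x y)) = pb y (pb x (pb x y))"
  using jacobi[of x y "pb x y"] skew_symmetric[of "pb x y" x] by (simp add: minus_right)

lemma bracket_sum_powers_self: "pb x (\<Sum>i\<in>I. a i *\<^sub>R x ^ i) = 0"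
  by (simp add: sum_right scaleR_right power_right)

lemma bracket_sum_powers:
  "pb y (\<Sum>i\<in>I. a i *\<^sub>R x ^ i) = - (pb x y * (\<Sum>i\<in>I. (real i * a i) *\<^sub>R x ^ (i - 1)))"
proof -
  have "pb y (a i *\<^sub>R x ^ i) = - (pb x y * ((real i * a i) *\<^sub>R x ^ (i - 1)))" for i
    unfolding scaleR_right power_right skew_symmetric[of y x] by (simp add: scaleR_conv_of_real)
  then show ?thesis
    by (simp add: sum_right sum_distrib_left sum_negf)
qed

lemma bracket_sum_powers_times:
  "pb x (\<Sum>i\<in>I. a i *\<^sub>R (x ^ i * y)) = pb x y * (\<Sum>i\<in>I. a i *\<^sub>R x ^ i)"
  by (simp add: sum_right scaleR_right leibniz power_right sum_distrib_left mult.commute)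

end

lemma sum_derivative_powers_shift:
  fixes x :: "'a::real_algebra_1"
  shows "(\<Sum>i\<in>{1..n + 1}. (real i * a i) *\<^sub>R x ^ (i - 1))
       = a 1 *\<^sub>R 1 + (\<Sum>i\<in>{1..n}. ((real i + 1) * a (i + 1)) *\<^sub>R x ^ i)"
proof -
  have "(\<Sum>i\<in>{1..n + 1}. (real i * a i) *\<^sub>R x ^ (i - 1))
      = a 1 *\<^sub>R 1 + (\<Sum>i\<in>{Suc 1..Suc n}. (real i * a i) *\<^sub>R x ^ (i - 1))"
    by (subst sum.atLeast_Suc_atMost) simp_all
  also have "(\<Sum>i\<in>{Suc 1..Suc n}. (real i * a i) *\<^sub>R x ^ (i - 1))
      = (\<Sum>i\<in>{1..n}. ((real i + 1) * a (i + 1)) *\<^sub>R x ^ i)"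
    unfolding sum.shift_bounds_cl_Suc_ivl by (simp add: add.commute)
  finally show ?thesis .
qed

lemma alg_indep2_coeffs_eq_zero:
  assumes indep: "alg_indep2 A B" and "finite S" and supp: "{(i, j). c i j \<noteq> 0} \<subseteq> S"
    and rel: "(\<Sum>(i, j)\<in>S. c i j *\<^sub>R (A ^ i * B ^ j)) = 0"
  shows "c i j = 0"
proof -
  have "(\<Sum>(i, j)\<in>{(i, j). c i j \<noteq> 0}. c i j *\<^sub>R (A ^ i * B ^ j))
      = (\<Sum>(i, j)\<in>S. c i j *\<^sub>R (A ^ i * B ^ j))"
    by (rule sum.mono_neutral_left[OF \<open>finite S\<close> supp]) auto
  then have "(\<Sum>(i, j)\<in>{(i, j). c i j \<noteq> 0}. c i j *\<^sub>R (A ^ i * B ^ j)) = 0"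
    using rel by simp
  then show ?thesis
    using indep finite_subset[OF supp \<open>finite S\<close>] unfolding alg_indep2_def by blast
qed

lemma alg_indep2_affine_eq_zero:
  assumes indep: "alg_indep2 A B"
    and rel: "c\<^sub>0 *\<^sub>R 1 + (\<Sum>i\<in>{1..n}. c i *\<^sub>R A ^ i) + d *\<^sub>R B = 0"
  shows "c\<^sub>0 = 0" and "d = 0" and "\<forall>i\<in>{1..n}. c i = 0"
proof -
  define coeff where "coeff i j =
    (if j = 0 then if i = 0 then c\<^sub>0 else if i \<le> n then c i else 0
     else if j = 1 \<and> i = 0 then d else 0)" for i j :: nat
  define S where "S = insert (0::nat, 1::nat) ((\<lambda>i. (i, 0)) ` {0..n})"
  have "(\<Sum>(i, j)\<in>S. coeff i j *\<^sub>R (A ^ i * B ^ j)) = d *\<^sub>R B + (\<Sum>i\<in>{0..n}. coeff i 0 *\<^sub>R A ^ i)"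
    unfolding S_def by (subst sum.insert) (auto simp: sum.reindex inj_on_def coeff_def)
  also have "\<dots> = 0"
    using rel by (subst sum.atLeast_Suc_atMost) (simp_all add: coeff_def algebra_simps)
  finally have coeff_zero: "coeff i j = 0" for i j
    by (rule alg_indep2_coeffs_eq_zero[OF indep, rotated 2])
      (auto simp: S_def coeff_def split: if_splits)
  show "c\<^sub>0 = 0" using coeff_zero[of 0 0] by (simp add: coeff_def)
  show "d = 0" using coeff_zero[of 0 1] by (simp add: coeff_def)
  show "\<forall>i\<in>{1..n}. c i = 0"
  proof
    fix i assume "i \<in> {1..n}"
    then show "c i = 0" using coeff_zero[of i 0] by (simp add: coeff_def)
  qed
qed

lemma poisson_jacobi_coefficient_relation:
  fixes pb :: "'a::{real_algebra_1,idom} \<Rightarrow> 'a \<Rightarrow> 'a"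
  assumes pois: "poisson_bracket pb"
    and C_nz: "pb A B \<noteq> 0"
    and AC: "pb A (pb A B) =
      (\<Sum>i\<in>{1..n + 1}. \<alpha> i *\<^sub>R A ^ i) + \<delta> *\<^sub>R B + \<epsilon> *\<^sub>R 1 + (2 * \<beta>) *\<^sub>R (A * B)"
    and BC: "pb B (pb A B) =
      (\<Sum>i\<in>I. lam i *\<^sub>R A ^ i) + \<rho> *\<^sub>R B ^ 2 + \<eta> *\<^sub>R B
      + (\<Sum>i\<in>{1..n}. (2 * \<omega> i) *\<^sub>R (A ^ i * B)) + \<zeta> *\<^sub>R 1"
  shows "(\<alpha> 1 + \<eta>) *\<^sub>R 1 + (\<Sum>i\<in>{1..n}. ((real i + 1) * \<alpha> (i + 1) + 2 * \<omega> i) *\<^sub>R A ^ i)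
      + (2 * \<beta> + 2 * \<rho>) *\<^sub>R B = 0"
proof -
  interpret poisson pb by (rule poisson.intro[OF pois])
  define C where "C = pb A B"
  define P where "P = \<alpha> 1 *\<^sub>R 1
    + (\<Sum>i\<in>{1..n}. ((real i + 1) * \<alpha> (i + 1)) *\<^sub>R A ^ i) + (2 * \<beta>) *\<^sub>R B"
  define Q where "Q = \<eta> *\<^sub>R 1 + (\<Sum>i\<in>{1..n}. (2 * \<omega> i) *\<^sub>R A ^ i) + (2 * \<rho>) *\<^sub>R B"
  have "pb B (pb A C) = - (C * P)"
    unfolding C_def P_def AC add_right scaleR_right bracket_sum_powers sum_derivative_powers_shift
    by (simp add: leibniz skew_symmetric[of B A] algebra_simps)
  moreover have "pb A (pb B C) = C * Q"
    unfolding C_def Q_def BC add_right scaleR_right bracket_sum_powers_self bracket_sum_powers_times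
    by (simp add: power_right scaleR_conv_of_real algebra_simps)
  ultimately have "C * (P + Q) = 0"
    using jacobi_commute[of A B] by (simp add: C_def distrib_left neg_eq_iff_add_eq_0)
  then have "P + Q = 0"
    using C_nz by (simp add: C_def)
  then show ?thesis
    unfolding P_def Q_def by (simp add: scaleR_add_left sum.distrib algebra_simps)
qed

theorem proposition1:
  fixes pb :: "'a::{real_algebra_1,idom} \<Rightarrow> 'a \<Rightarrow> 'a"
    and A B :: 'a and M :: nat
    and \<alpha> lam \<omega> :: "nat \<Rightarrow> real"
    and \<delta> \<epsilon> \<beta> \<rho> \<eta> \<zeta> :: real
  assumes pois: "poisson_bracket pb"
    and M: "M \<ge> 1"
    and indep: "alg_indep2 A B"
    and C_nz: "pb A B \<noteq> 0"
    and AC: "pb A (pb A B) =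
      (\<Sum>i\<in>{1..M div 2 + 1}. \<alpha> i *\<^sub>R A ^ i) + \<delta> *\<^sub>R B + \<epsilon> *\<^sub>R 1 + (2 * \<beta>) *\<^sub>R (A * B)"
    and BC: "pb B (pb A B) =
      (\<Sum>i\<in>{1..M}. lam i *\<^sub>R A ^ i) + \<rho> *\<^sub>R B ^ 2 + \<eta> *\<^sub>R B
      + (\<Sum>i\<in>{1..M div 2}. (2 * \<omega> i) *\<^sub>R (A ^ i * B)) + \<zeta> *\<^sub>R 1"
  shows "\<eta> = - \<alpha> 1 \<and> \<rho> = - \<beta> \<and>
         (\<forall>i\<in>{1..M div 2}. 2 * \<omega> i = - (real i + 1) * \<alpha> (i + 1)) \<and>
         pb B (pb A B) =
           (\<Sum>i\<in>{1..M}. lam i *\<^sub>R A ^ i) - \<beta> *\<^sub>R B ^ 2 - \<alpha> 1 *\<^sub>R B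
           - (\<Sum>i\<in>{1..M div 2}. ((real i + 1) * \<alpha> (i + 1)) *\<^sub>R (A ^ i * B)) + \<zeta> *\<^sub>R 1"
proof -
  note coeffs = alg_indep2_affine_eq_zero[OF indep
      poisson_jacobi_coefficient_relation[OF pois C_nz AC BC]]
  have \<eta>: "\<eta> = - \<alpha> 1" and \<rho>: "\<rho> = - \<beta>"
    using coeffs(1,2) by simp_all
  have \<omega>: "2 * \<omega> i = - ((real i + 1) * \<alpha> (i + 1))" if "i \<in> {1..M div 2}" for i
    using bspec[OF coeffs(3) that] by (simp add: eq_neg_iff_add_eq_0 algebra_simps)
  then have "(\<Sum>i\<in>{1..M div 2}. (2 * \<omega> i) *\<^sub>R (A ^ i * B))
      = - (\<Sum>i\<in>{1..M div 2}. ((real i + 1) * \<alpha> (i + 1)) *\<^sub>R (A ^ i * B))"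
    by (simp add: sum_negf[symmetric])
  with \<eta> \<rho> \<omega> BC show ?thesis
    by (simp add: algebra_simps)
qed

end
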